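(* Let $\boldsymbol X=A\times_{\max}\boldsymbol Z$ be a recursive max-linear model on a DAG $\mathcal D=(V,E)$ satisfying Assumptions A, fix any $a>1$, and let $O\subseteq V$ satisfy $\mathrm{An}(O)\cap(V\setminus O)=\emptyset$. Then $j\in V\setminus O$ satisfies $\mathrm{an}(j)\cap(V\setminus O)=\emptyset$ if and only if $$\sum_{\ell\in (V\setminus O)\setminus\{j\}}\big(a_{i\ell}^2\vee a^2a_{j\ell}^2-a_{i\ell}^2\vee a_{j\ell}^2\big)=(a^2-1)\sum_{\ell\in (V\setminus O)\setminus\{j\}}a_{j\ell}^2\quad\text{for all } i\in V\setminus(O\cup\{j\}).$$
   Context: Let $\mathcal D=(V,E)$ be a directed acyclic graph with $V=\{1,\dots,d\}$; $\mathrm{pa}(i)$, $\mathrm{an}(i)$ denote parents and ancestors (nodes with a directed path to $i$) of $i$, $\mathrm{An}(i)=\mathrm{an}(i)\cup\{i\}$, $\mathrm{An}(U)=\bigcup_{u\in U}\mathrm{An}(u)$; $\vee$ denotes maximum. A recursive max-linear model (RMLM) on $\mathcal D$ is the unique solution of $X_i=\bigvee_{k\in\mathrm{pa}(i)}c_{ik}X_k\vee c_{ii}Z_i$, $i\in V$, with edge weights $c_{ik}>0$ ($k\in \mathrm{pa}(i)$), $c_{ii}>0$; it equals $X_i=(A\times_{\max}\boldsymbol Z)_i=\bigvee_{j\in V}a_{ij}Z_j$ where $a_{ii}=c_{ii}$, $a_{ij}$ for $j\in\mathrm{an}(i)$ is the maximum over all directed paths $j=\ell_0\to\ell_1\to\dots\to\ell_m=i$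 of $c_{jj}c_{\ell_1\ell_0}\cdots c_{\ell_m\ell_{m-1}}$, and $a_{ij}=0$ for $j\notin\mathrm{An}(i)$. Assumptions A: (A1) $Z_1,\dots,Z_d$ are independent, nonnegative, atom-free, with $n\,\mathbb P(n^{-1/2}Z_i>z)\to z^{-2}$ as $n\to\infty$ for all $z>0$; (A2) the norm is the Euclidean norm; (A3) $A$ is standardised, i.e. each row is divided by its Euclidean norm so that $\sum_{j\in V}a_{ij}^2=1$ for all $i$ (the model is taken as $\boldsymbol X=A\times_{\max}\boldsymbol Z$ with this standardised $A$). Under these assumptions it is known that $a_{ij}>0$ iff $j\in\mathrm{An}(i)$, and $a_{jj}>a_{ij}$ for all $i\neq j$. *)

theory Defs
  imports Complex_Main
begin

text \<open>DAG on V = {1..d}; an edge (k, i) in E means k \<rightarrow> i (k is a parent of i).\<close>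

definition verts :: "nat \<Rightarrow> nat set" where
  "verts d = {1..d}"

definition ancestors :: "(nat \<times> nat) set \<Rightarrow> nat \<Rightarrow> nat set" where
  "ancestors E i = {k. (k, i) \<in> E\<^sup>+}"

definition Ancestors :: "(nat \<times> nat) set \<Rightarrow> nat set \<Rightarrow> nat set" where
  "Ancestors E U = (\<Union>u\<in>U. ancestors E u \<union> {u})"

definition dpath :: "(nat \<times> nat) set \<Rightarrow> nat list \<Rightarrow> bool" where
  "dpath E p \<longleftrightarrow> p \<noteq> [] \<and> (\<forall>t. Suc t < length p \<longrightarrow> (p ! t, p ! Suc t) \<in> E)"

definition paths_from_to :: "(nat \<times> nat) set \<Rightarrow> nat \<Rightarrow> nat \<Rightarrow> nat list set" where
  "paths_from_to E j i = {p. dpath E p \<and> hd p = j \<and> last p = i}"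

definition path_weight :: "(nat \<Rightarrow> nat \<Rightarrow> real) \<Rightarrow> nat list \<Rightarrow> real" where
  "path_weight c p = c (hd p) (hd p) * prod_list (map (\<lambda>(u, v). c v u) (zip p (tl p)))"

text \<open>Unstandardised max-linear coefficient a_ij (0 if j is not in An(i)).\<close>
definition ml_coef :: "(nat \<times> nat) set \<Rightarrow> (nat \<Rightarrow> nat \<Rightarrow> real) \<Rightarrow> nat \<Rightarrow> nat \<Rightarrow> real" where
  "ml_coef E c i j =
     (if paths_from_to E j i = {} then 0 else Max (path_weight c ` paths_from_to E j i))"

definition std_coef :: "nat \<Rightarrow> (nat \<times> nat) set \<Rightarrow> (nat \<Rightarrow> nat \<Rightarrow> real) \<Rightarrow> nat \<Rightarrow> nat \<Rightarrow> real" where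
  "std_coef d E c i j = ml_coef E c i j / sqrt (\<Sum>l\<in>verts d. (ml_coef E c i l)\<^sup>2)"

end

theory Submission imports Defs
begin

text \<open>If j has no unobserved ancestor, then a_jl = 0 for every unobserved l \<noteq> j and both sides
vanish. Conversely, each summand is at most (a^2 - 1) a_jl^2, with equality only if a_jl = 0 or
a_il \<le> a_jl. For an unobserved ancestor l of j, taking i = l fails this at l, because
0 < a_jl < a_ll: row j dominates a positive multiple of row l entrywise, strictly at entry j,
so standardisation shrinks a_jl relative to a_ll.\<close>

lemma dpath_nth_trancl:
  "dpath E p \<Longrightarrow> s < t \<Longrightarrow> t < length p \<Longrightarrow> (p ! s, p ! t) \<in> E\<^sup>+"
proof (induction t)
  case 0
  then show ?case by simp
next
  case (Suc t)
  have edge: "(p ! t, p ! Suc t) \<in> E"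
    using Suc.prems unfolding dpath_def by auto
  show ?case
  proof (cases "s = t")
    case True
    then show ?thesis using edge by auto
  next
    case False
    then have "(p ! s, p ! t) \<in> E\<^sup>+" using Suc by auto
    then show ?thesis using edge by (rule trancl_into_trancl)
  qed
qed

lemma dpath_hd_last_trancl:
  assumes "dpath E p" "2 \<le> length p"
  shows "(hd p, last p) \<in> E\<^sup>+"
proof -
  have "p \<noteq> []" using assms(2) by auto
  then show ?thesis
    using dpath_nth_trancl[OF assms(1), of 0 "length p - 1"] assms(2)
    by (simp add: hd_conv_nth last_conv_nth)
qed

lemma dpath_distinct:
  assumes "acyclic E" "dpath E p"
  shows "distinct p"
  unfolding distinct_conv_nth
proof (intro allI impI)
  fix s t assume "s < length p" "t < length p" "s \<noteq> t"
  then have "(p ! s, p ! t) \<in> E\<^sup>+ \<or> (p ! t, p ! s) \<in> E\<^sup>+"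
    using dpath_nth_trancl[OF assms(2)] by (meson linorder_neq_iff)
  then show "p ! s \<noteq> p ! t"
    using assms(1) unfolding acyclic_def by auto
qed

lemma dpath_iff_zip: "dpath E p \<longleftrightarrow> p \<noteq> [] \<and> set (zip p (tl p)) \<subseteq> E"
proof
  assume "dpath E p"
  then show "p \<noteq> [] \<and> set (zip p (tl p)) \<subseteq> E"
    unfolding dpath_def by (auto simp: in_set_zip nth_tl)
next
  assume h: "p \<noteq> [] \<and> set (zip p (tl p)) \<subseteq> E"
  show "dpath E p"
    unfolding dpath_def
  proof (intro conjI allI impI)
    show "p \<noteq> []" using h by simp
    fix t assume "Suc t < length p"
    then have "(p ! t, p ! Suc t) \<in> set (zip p (tl p))"
      by (auto simp: in_set_zip nth_tl intro!: exI[of _ t])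
    then show "(p ! t, p ! Suc t) \<in> E" using h by auto
  qed
qed

lemma zip_tl_append_Cons:
  "zip (xs @ x # ys) (tl (xs @ x # ys)) = zip (xs @ [x]) (tl (xs @ [x])) @ zip (x # ys) ys"
proof (induction xs)
  case (Cons y xs)
  then show ?case by (cases xs) auto
qed simp

lemma dpath_append:
  assumes q: "dpath E q" and p: "dpath E p" and joint: "last q = hd p"
  shows "dpath E (q @ tl p)" "hd (q @ tl p) = hd q" "last (q @ tl p) = last p"
    and "path_weight c (q @ tl p) * c (hd p) (hd p) = path_weight c q * path_weight c p"
proof -
  have "q \<noteq> []" "p \<noteq> []" using p q unfolding dpath_def by auto
  define x where "x = hd p"
  obtain q' p' where q_eq: "q = q' @ [x]" and p_eq: "p = x # p'"
    using \<open>q \<noteq> []\<close> \<open>p \<noteq> []\<close> joint unfolding x_def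
    by (metis append_butlast_last_id list.collapse)
  have zip_eq: "zip (q @ tl p) (tl (q @ tl p)) = zip q (tl q) @ zip p (tl p)"
    unfolding q_eq p_eq using zip_tl_append_Cons[of q' x p'] by simp
  show "dpath E (q @ tl p)"
    using p q \<open>q \<noteq> []\<close> unfolding dpath_iff_zip zip_eq by auto
  show "hd (q @ tl p) = hd q" using \<open>q \<noteq> []\<close> by simp
  show "last (q @ tl p) = last p" unfolding q_eq p_eq by simp
  show "path_weight c (q @ tl p) * c (hd p) (hd p) = path_weight c q * path_weight c p"
    unfolding path_weight_def zip_eq using \<open>q \<noteq> []\<close> x_def p_eq by (simp add: hd_append)
qed

lemma paths_from_to_finite:
  assumes E_sub: "E \<subseteq> verts d \<times> verts d" and dag: "acyclic E"
  shows "finite (paths_from_to E j i)"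
proof -
  let ?A = "insert j (verts d)"
  have "paths_from_to E j i \<subseteq> {xs. set xs \<subseteq> ?A \<and> length xs \<le> card ?A}"
  proof
    fix p assume "p \<in> paths_from_to E j i"
    then have p: "dpath E p" "hd p = j" unfolding paths_from_to_def by auto
    have set_p: "set p \<subseteq> ?A"
    proof
      fix x assume "x \<in> set p"
      then obtain t where t: "t < length p" "p ! t = x" by (auto simp: in_set_conv_nth)
      show "x \<in> ?A"
      proof (cases t)
        case 0
        then show ?thesis using t p by (simp add: hd_conv_nth)
      next
        case (Suc t')
        then have "(p ! t', x) \<in> E" using p(1) t unfolding dpath_def by auto
        then show ?thesis using E_sub by auto
      qed
    qed
    have "length p = card (set p)"
      using dpath_distinct[OF dag p(1)] by (simp add: distinct_card)
    also have "\<dots> \<le> card ?A"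
      using set_p by (intro card_mono) (auto simp: verts_def)
    finally show "p \<in> {xs. set xs \<subseteq> ?A \<and> length xs \<le> card ?A}" using set_p by simp
  qed
  moreover have "finite {xs. set xs \<subseteq> ?A \<and> length xs \<le> card ?A}"
    by (rule finite_lists_length_le) (simp add: verts_def)
  ultimately show ?thesis by (rule finite_subset)
qed

lemma paths_from_to_long:
  assumes "p \<in> paths_from_to E k i" "p \<noteq> [k]"
  shows "(k, i) \<in> E\<^sup>+"
proof -
  have p: "dpath E p" "hd p = k" "last p = i" using assms(1) unfolding paths_from_to_def by auto
  then have "2 \<le> length p"
    using assms(2) unfolding dpath_def by (cases p) (auto simp: Suc_le_eq)
  then show ?thesis using dpath_hd_last_trancl[OF p(1)] p by simp
qed

lemma paths_from_to_refl:
  assumes "acyclic E"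
  shows "paths_from_to E x x = {[x]}"
proof -
  have "[x] \<in> paths_from_to E x x" unfolding paths_from_to_def dpath_def by simp
  moreover have "p = [x]" if "p \<in> paths_from_to E x x" for p
    using paths_from_to_long[OF that] assms unfolding acyclic_def by blast
  ultimately show ?thesis by blast
qed

lemma paths_from_to_eq_empty:
  assumes "k \<noteq> i" "(k, i) \<notin> E\<^sup>+"
  shows "paths_from_to E k i = {}"
proof -
  have "[k] \<notin> paths_from_to E k i" using assms(1) unfolding paths_from_to_def by simp
  then show ?thesis using paths_from_to_long assms(2) by blast
qed

lemma paths_from_to_nonempty: "(k, i) \<in> E\<^sup>+ \<Longrightarrow> paths_from_to E k i \<noteq> {}"
proof (induction rule: trancl_induct)
  case (base y)
  then have "[k, y] \<in> paths_from_to E k y"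
    unfolding paths_from_to_def dpath_def by (auto simp: less_Suc_eq)
  then show ?case by blast
next
  case (step y z)
  then obtain p where p: "p \<in> paths_from_to E k y" by blast
  have "dpath E [y, z]" using step(2) unfolding dpath_def by (auto simp: less_Suc_eq)
  then have "p @ tl [y, z] \<in> paths_from_to E k z"
    using dpath_append[of E p "[y, z]"] p unfolding paths_from_to_def by auto
  then show ?case by blast
qed

lemma prod_list_pos: "(\<And>x. x \<in> set xs \<Longrightarrow> (0::'a::linordered_semidom) < x) \<Longrightarrow> 0 < prod_list xs"
  by (induction xs) auto

locale max_linear_model =
  fixes d :: nat and E :: "(nat \<times> nat) set" and c :: "nat \<Rightarrow> nat \<Rightarrow> real"
  assumes E_sub: "E \<subseteq> verts d \<times> verts d"
    and dag: "acyclic E"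
    and edge_pos: "\<And>k i. (k, i) \<in> E \<Longrightarrow> c i k > 0"
    and diag_pos: "\<And>i. i \<in> verts d \<Longrightarrow> c i i > 0"
begin

abbreviation row_sqnorm :: "nat \<Rightarrow> real" where
  "row_sqnorm i \<equiv> \<Sum>l\<in>verts d. (ml_coef E c i l)\<^sup>2"

lemma trancl_in_verts: "(k, i) \<in> E\<^sup>+ \<Longrightarrow> k \<in> verts d \<and> i \<in> verts d"
  using trancl_subset_Sigma[OF E_sub] by auto

lemma ml_coef_ge_path_weight: "p \<in> paths_from_to E k i \<Longrightarrow> path_weight c p \<le> ml_coef E c i k"
  unfolding ml_coef_def using paths_from_to_finite[OF E_sub dag] by (auto intro!: Max_ge)

lemma ml_coef_attained:
  assumes "paths_from_to E k i \<noteq> {}"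
  obtains p where "p \<in> paths_from_to E k i" "ml_coef E c i k = path_weight c p"
proof -
  have "Max (path_weight c ` paths_from_to E k i) \<in> path_weight c ` paths_from_to E k i"
    using paths_from_to_finite[OF E_sub dag] assms by (intro Max_in) auto
  then show ?thesis using that assms unfolding ml_coef_def by auto
qed

lemma path_weight_pos:
  assumes "p \<in> paths_from_to E k i" "k \<in> verts d"
  shows "path_weight c p > 0"
proof -
  have p: "set (zip p (tl p)) \<subseteq> E" "hd p = k"
    using assms(1) unfolding paths_from_to_def dpath_iff_zip by auto
  have "0 < prod_list (map (\<lambda>(u, v). c v u) (zip p (tl p)))"
    by (rule prod_list_pos) (use p edge_pos in auto)
  then show ?thesis unfolding path_weight_def using p diag_pos[OF assms(2)] by simp
qed

lemma ml_coef_nonneg: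
  assumes "k \<in> verts d"
  shows "ml_coef E c i k \<ge> 0"
proof (cases "paths_from_to E k i = {}")
  case False
  then obtain p where "p \<in> paths_from_to E k i" "ml_coef E c i k = path_weight c p"
    by (rule ml_coef_attained)
  then show ?thesis using path_weight_pos assms by fastforce
qed (simp add: ml_coef_def)

lemma ml_coef_pos: "(k, i) \<in> E\<^sup>+ \<Longrightarrow> ml_coef E c i k > 0"
  using paths_from_to_nonempty ml_coef_ge_path_weight path_weight_pos trancl_in_verts
  by (meson ex_in_conv less_le_trans)

lemma ml_coef_diag: "ml_coef E c i i = c i i"
  unfolding ml_coef_def paths_from_to_refl[OF dag] by (simp add: path_weight_def)

lemma ml_coef_eq_0: "k \<noteq> i \<Longrightarrow> (k, i) \<notin> E\<^sup>+ \<Longrightarrow> ml_coef E c i k = 0"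
  unfolding ml_coef_def by (simp add: paths_from_to_eq_empty)

lemma row_sqnorm_pos: "i \<in> verts d \<Longrightarrow> row_sqnorm i > 0"
proof -
  assume i: "i \<in> verts d"
  have "0 < (ml_coef E c i i)\<^sup>2" using ml_coef_diag diag_pos[OF i] by simp
  also have "\<dots> \<le> row_sqnorm i"
    by (rule member_le_sum) (use i in \<open>auto simp: verts_def\<close>)
  finally show ?thesis .
qed

text \<open>Appending a heaviest path k \<leadsto> l to a heaviest path l \<leadsto> j counts the factor c l l twice.\<close>
lemma ml_coef_mult_le:
  assumes lj: "(l, j) \<in> E\<^sup>+" and k: "k \<in> verts d"
  shows "ml_coef E c j l * ml_coef E c l k \<le> ml_coef E c j k * c l l"
proof (cases "paths_from_to E k l = {}")
  case True
  then show ?thesis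
    using ml_coef_nonneg[OF k, of j] diag_pos trancl_in_verts[OF lj]
    by (simp add: ml_coef_def[of E c l k] less_imp_le)
next
  case False
  obtain q where q: "q \<in> paths_from_to E k l" "ml_coef E c l k = path_weight c q"
    using ml_coef_attained[OF False] by blast
  obtain p where p: "p \<in> paths_from_to E l j" "ml_coef E c j l = path_weight c p"
    using ml_coef_attained[OF paths_from_to_nonempty[OF lj]] by blast
  have q': "dpath E q" "hd q = k" "last q = l" and p': "dpath E p" "hd p = l" "last p = j"
    using p q unfolding paths_from_to_def by auto
  have "q @ tl p \<in> paths_from_to E k j"
    using dpath_append[OF q'(1) p'(1)] q' p' unfolding paths_from_to_def by auto
  then have "path_weight c (q @ tl p) * c l l \<le> ml_coef E c j k * c l l"
    using diag_pos trancl_in_verts[OF lj] by (simp add: ml_coef_ge_path_weight)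
  moreover have "path_weight c (q @ tl p) * c l l = path_weight c q * path_weight c p"
    using dpath_append(4)[OF q'(1) p'(1), of c] q' p' by simp
  ultimately show ?thesis using p q by (simp add: mult.commute)
qed

text \<open>Row j dominates row l scaled by a_jl / c_ll entrywise (by the previous lemma), strictly
in column j, where row l vanishes by acyclicity.\<close>
lemma row_sqnorm_dominance:
  assumes lj: "(l, j) \<in> E\<^sup>+"
  shows "(ml_coef E c j l)\<^sup>2 * row_sqnorm l < (c l l)\<^sup>2 * row_sqnorm j"
proof -
  have l: "l \<in> verts d" and j: "j \<in> verts d" using trancl_in_verts[OF lj] by auto
  have cl: "c l l > 0" using diag_pos[OF l] .
  define r where "r = ml_coef E c j l / c l l"
  have r: "r > 0" unfolding r_def using ml_coef_pos[OF lj] cl by simp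
  have entry_le: "(r * ml_coef E c l k)\<^sup>2 \<le> (ml_coef E c j k)\<^sup>2" if k: "k \<in> verts d" for k
  proof (rule power_mono)
    show "r * ml_coef E c l k \<le> ml_coef E c j k"
      using ml_coef_mult_le[OF lj k] cl unfolding r_def by (simp add: field_simps)
    show "0 \<le> r * ml_coef E c l k" using r ml_coef_nonneg[OF k] by simp
  qed
  have "l \<noteq> j" "(j, l) \<notin> E\<^sup>+"
    using lj dag unfolding acyclic_def by (auto dest: trancl_trans)
  then have entry_less: "(r * ml_coef E c l j)\<^sup>2 < (ml_coef E c j j)\<^sup>2"
    using ml_coef_eq_0 ml_coef_diag diag_pos[OF j] by simp
  have "r\<^sup>2 * row_sqnorm l = (\<Sum>k\<in>verts d. (r * ml_coef E c l k)\<^sup>2)"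
    by (simp add: power_mult_distrib sum_distrib_left)
  also have "\<dots> < row_sqnorm j"
    by (rule sum_strict_mono_ex1) (use entry_le entry_less j in \<open>auto simp: verts_def\<close>)
  finally show ?thesis using cl unfolding r_def by (simp add: power_divide field_simps)
qed

lemma std_coef_pos: "(l, j) \<in> E\<^sup>+ \<Longrightarrow> std_coef d E c j l > 0"
  unfolding std_coef_def using ml_coef_pos row_sqnorm_pos trancl_in_verts by (simp add: divide_pos_pos)

lemma std_coef_eq_0: "l \<noteq> j \<Longrightarrow> (l, j) \<notin> E\<^sup>+ \<Longrightarrow> std_coef d E c j l = 0"
  unfolding std_coef_def by (simp add: ml_coef_eq_0)

lemma std_coef_less_diag:
  assumes l: "l \<in> verts d" and "j \<noteq> l"
  shows "std_coef d E c j l < std_coef d E c l l"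
proof -
  have diag: "std_coef d E c l l > 0"
    unfolding std_coef_def using ml_coef_diag diag_pos[OF l] row_sqnorm_pos[OF l] by simp
  show ?thesis
  proof (cases "(l, j) \<in> E\<^sup>+")
    case False
    then show ?thesis using std_coef_eq_0 assms diag by simp
  next
    case True
    have j: "j \<in> verts d" using trancl_in_verts[OF True] by simp
    have "(std_coef d E c j l)\<^sup>2 < (std_coef d E c l l)\<^sup>2"
      using row_sqnorm_dominance[OF True] row_sqnorm_pos[OF l] row_sqnorm_pos[OF j]
      unfolding std_coef_def ml_coef_diag by (simp add: power_divide field_simps)
    then show ?thesis using diag by (simp add: power_less_imp_less_base)
  qed
qed

lemma no_ancestor_in_iff_std_coef_dominated:
  "ancestors E j \<inter> U = {} \<longleftrightarrow> (\<forall>i \<in> U - {j}. \<forall>l \<in> U - {j}.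
     std_coef d E c j l = 0 \<or> (std_coef d E c i l)\<^sup>2 \<le> (std_coef d E c j l)\<^sup>2)"
proof
  assume "ancestors E j \<inter> U = {}"
  then have "std_coef d E c j l = 0" if "l \<in> U - {j}" for l
    using that by (intro std_coef_eq_0) (auto simp: ancestors_def)
  then show "\<forall>i \<in> U - {j}. \<forall>l \<in> U - {j}.
     std_coef d E c j l = 0 \<or> (std_coef d E c i l)\<^sup>2 \<le> (std_coef d E c j l)\<^sup>2"
    by blast
next
  assume dominated: "\<forall>i \<in> U - {j}. \<forall>l \<in> U - {j}.
     std_coef d E c j l = 0 \<or> (std_coef d E c i l)\<^sup>2 \<le> (std_coef d E c j l)\<^sup>2"
  show "ancestors E j \<inter> U = {}"
  proof (rule ccontr)
    assume "ancestors E j \<inter> U \<noteq> {}"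
    then obtain l where lj: "(l, j) \<in> E\<^sup>+" and l: "l \<in> U - {j}"
      using dag unfolding ancestors_def acyclic_def by auto
    have pos: "0 < std_coef d E c j l"
      using std_coef_pos[OF lj] .
    then have "(std_coef d E c j l)\<^sup>2 < (std_coef d E c l l)\<^sup>2"
      using std_coef_less_diag trancl_in_verts[OF lj] l by (simp add: power_strict_mono)
    moreover have "std_coef d E c j l = 0 \<or> (std_coef d E c l l)\<^sup>2 \<le> (std_coef d E c j l)\<^sup>2"
      using dominated l by blast
    ultimately show False using pos by linarith
  qed
qed

end

lemma max_scaled_diff_le:
  fixes b x y :: real
  assumes "1 \<le> b" "0 \<le> y"
  shows "max x (b * y) - max x y \<le> (b - 1) * y"
proof -
  have "y \<le> b * y" using mult_right_mono[OF assms] by simp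
  then show ?thesis by (auto simp: max_def algebra_simps)
qed

lemma max_scaled_diff_eq_iff:
  fixes b x y :: real
  assumes "1 < b" "0 \<le> y"
  shows "max x (b * y) - max x y = (b - 1) * y \<longleftrightarrow> y = 0 \<or> x \<le> y"
proof (cases "y = 0")
  case False
  then have "y < b * y" using mult_strict_right_mono[of 1 b y] assms by simp
  then show ?thesis using False by (auto simp: max_def algebra_simps)
qed simp

lemma sum_max_scaled_diff_eq_iff:
  fixes b :: real and x y :: "'a \<Rightarrow> real"
  assumes "finite L" "1 < b" "\<And>l. l \<in> L \<Longrightarrow> 0 \<le> y l"
  shows "(\<Sum>l\<in>L. max (x l) (b * y l) - max (x l) (y l)) = (b - 1) * (\<Sum>l\<in>L. y l)
    \<longleftrightarrow> (\<forall>l\<in>L. y l = 0 \<or> x l \<le> y l)"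
proof -
  let ?gap = "\<lambda>l. (b - 1) * y l - (max (x l) (b * y l) - max (x l) (y l))"
  have "(\<Sum>l\<in>L. max (x l) (b * y l) - max (x l) (y l)) = (b - 1) * (\<Sum>l\<in>L. y l)
      \<longleftrightarrow> sum ?gap L = 0"
    by (auto simp: sum_subtractf sum_distrib_left)
  also have "\<dots> \<longleftrightarrow> (\<forall>l\<in>L. ?gap l = 0)"
    using assms max_scaled_diff_le[of b] by (intro sum_nonneg_eq_0_iff) auto
  also have "\<dots> \<longleftrightarrow> (\<forall>l\<in>L. y l = 0 \<or> x l \<le> y l)"
  proof -
    have "?gap l = 0 \<longleftrightarrow> y l = 0 \<or> x l \<le> y l" if "l \<in> L" for l
      using max_scaled_diff_eq_iff[OF assms(2) assms(3)[OF that], of "x l"] by linarith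
    then show ?thesis by blast
  qed
  finally show ?thesis .
qed

theorem corollary4p3:
  fixes d :: nat and E :: "(nat \<times> nat) set" and c :: "nat \<Rightarrow> nat \<Rightarrow> real"
    and a :: real and Obs :: "nat set" and j :: nat
  assumes E_sub: "E \<subseteq> verts d \<times> verts d"
    and dag: "acyclic E"
    and edge_pos: "\<And>k i. (k, i) \<in> E \<Longrightarrow> c i k > 0"
    and diag_pos: "\<And>i. i \<in> verts d \<Longrightarrow> c i i > 0"
    and a_gt: "a > 1"
    and O_sub: "Obs \<subseteq> verts d"
    and O_anc: "Ancestors E Obs \<inter> (verts d - Obs) = {}"
    and j_in: "j \<in> verts d - Obs"
  shows "ancestors E j \<inter> (verts d - Obs) = {} \<longleftrightarrow>
    (\<forall>i \<in> verts d - (Obs \<union> {j}).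
       (\<Sum>l\<in>(verts d - Obs) - {j}.
          max ((std_coef d E c i l)\<^sup>2) (a\<^sup>2 * (std_coef d E c j l)\<^sup>2)
          - max ((std_coef d E c i l)\<^sup>2) ((std_coef d E c j l)\<^sup>2))
       = (a\<^sup>2 - 1) * (\<Sum>l\<in>(verts d - Obs) - {j}. (std_coef d E c j l)\<^sup>2))"
proof -
  interpret max_linear_model d E c
    using E_sub dag edge_pos diag_pos by unfold_locales
  have "1 < a\<^sup>2" using a_gt by (simp add: one_less_power)
  moreover have "verts d - (Obs \<union> {j}) = (verts d - Obs) - {j}" by auto
  ultimately show ?thesis
    by (simp add: sum_max_scaled_diff_eq_iff no_ancestor_in_iff_std_coef_dominated verts_def)
qed

end
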